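(* Let $N\in\mathbb{C}^{m\times n}$ have rank $r$ and singular value decomposition $N=U\begin{pmatrix}\Sigma & 0\\ 0 & 0\end{pmatrix}V^{\ast}$, where $\Sigma\in\mathbb{C}^{r\times r}$ is diagonal with positive diagonal entries and $U\in\mathbb{C}^{m\times m}$, $V\in\mathbb{C}^{n\times n}$ are unitary. Let $X\in\mathbb{C}^{m\times m}$ and $Y\in\mathbb{C}^{n\times n}$ be nonsingular, and let $M_{1}=XN$, $M_{2}=NY$. (1) If $X=U\begin{pmatrix}X_{1} & 0\\ X_{2} & X_{4}\end{pmatrix}U^{\ast}$ for some $X_{1}\in\mathbb{C}^{r\times r}$, $X_{2}\in\mathbb{C}^{(m-r)\times r}$, $X_{4}\in\mathbb{C}^{(m-r)\times(m-r)}$, then $$M_{1}^{\dagger}=N^{\dagger}X^{-1}NN^{\dagger}(I+R^{\ast}R)^{-1}(I+R^{\ast}),$$ where $R=XE_{N}X^{-1}(E_{N}-I)$. (2) If $Y=V\begin{pmatrix}Y_{1} & Y_{3}\\ 0 & Y_{4}\end{pmatrix}V^{\ast}$ for some $Y_{1}\in\mathbb{C}^{r\times r}$, $Y_{3}\in\mathbb{C}^{r\times(n-r)}$, $Y_{4}\in\mathbb{C}^{(n-r)\times(n-r)}$, then $$M_{2}^{\dagger}=(I+L^{\ast})(I+LL^{\ast})^{-1}N^{\dagger}NY^{-1}N^{\dagger},$$ where $L=(F_{N}-I)Y^{-1}F_{N}Y$.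
   Context: For a complex matrix $A$, $A^{\ast}$ is its conjugate transpose and $A^{\dagger}$ its Moore--Penrose inverse. $E_{A}:=I-AA^{\dagger}$ and $F_{A}:=I-A^{\dagger}A$. $I$ denotes an identity matrix of the appropriate size. *)

theory Defs
  imports "Jordan_Normal_Form.Schur_Decomposition" "Jordan_Normal_Form.DL_Rank"
begin

definition unitary_mat :: "complex mat \<Rightarrow> nat \<Rightarrow> bool" where
  "unitary_mat U k \<longleftrightarrow> U \<in> carrier_mat k k \<and> U * mat_adjoint U = 1\<^sub>m k \<and> mat_adjoint U * U = 1\<^sub>m k"

definition minv :: "complex mat \<Rightarrow> complex mat" where
  "minv A = (THE B. B \<in> carrier_mat (dim_row A) (dim_row A) \<and>
                    A * B = 1\<^sub>m (dim_row A) \<and> B * A = 1\<^sub>m (dim_row A))"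

definition mp_pinv :: "complex mat \<Rightarrow> complex mat" where
  "mp_pinv A = (THE B. B \<in> carrier_mat (dim_col A) (dim_row A) \<and>
                  A * B * A = A \<and> B * A * B = B \<and>
                  mat_adjoint (A * B) = A * B \<and> mat_adjoint (B * A) = B * A)"

definition E_proj :: "complex mat \<Rightarrow> complex mat" where
  "E_proj A = 1\<^sub>m (dim_row A) - A * mp_pinv A"

definition F_proj :: "complex mat \<Rightarrow> complex mat" where
  "F_proj A = 1\<^sub>m (dim_col A) - mp_pinv A * A"

definition mat_rank :: "complex mat \<Rightarrow> nat" where
  "mat_rank A = vec_space.rank (dim_row A) A"

end

theory Submission
  imports Defs
begin

text \<open>Write P = N N^+, the orthogonal projection onto the range of N. In the basis given by U,
P = diag(I, 0), and the block-triangular shape of X says exactly that P X P = P X; the inverse of X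
has the same shape, so also P X^-1 P = P X^-1. Then C = X P X^-1 P satisfies P C = P, C P = C and
C X N = X N, and R = C - P, so that C^* C = P + R^* R = (I + R^* R) P, where I + R^* R is positive
definite. For the proposed B = N^+ X^-1 P (I + R^* R)^-1 (I + R^*) this gives
(X N) B = C (I + R^* R)^-1 C^* and B (X N) = N^+ N, both Hermitian, and the four Penrose equations
follow. Part (2) is part (1) for N^* and Y^*, after taking adjoints.\<close>

lemma mat_adjoint_dims [simp]:
  "dim_row (mat_adjoint A) = dim_col A" "dim_col (mat_adjoint A) = dim_row A"
  unfolding mat_adjoint_def by (auto simp: mat_of_rows_def)

lemma index_mat_adjoint [simp]:
  "i < dim_col A \<Longrightarrow> j < dim_row A \<Longrightarrow> mat_adjoint A $$ (i, j) = cnj (A $$ (j, i))"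
  unfolding mat_adjoint_def by (auto simp: mat_of_rows_def)

lemma mat_adjoint_carrier [simp]: "A \<in> carrier_mat m n \<Longrightarrow> mat_adjoint A \<in> carrier_mat n m"
  unfolding carrier_mat_def by simp

lemma mat_adjoint_mat_adjoint [simp]: "mat_adjoint (mat_adjoint (A :: complex mat)) = A"
  by (rule eq_matI) auto

lemma mat_adjoint_one [simp]: "mat_adjoint (1\<^sub>m n :: complex mat) = 1\<^sub>m n"
  by (rule eq_matI) auto

lemma mat_adjoint_zero [simp]: "mat_adjoint (0\<^sub>m n k :: complex mat) = 0\<^sub>m k n"
  by (rule eq_matI) auto

lemma mat_adjoint_mult:
  fixes A B :: "complex mat"
  assumes "dim_col A = dim_row B"
  shows "mat_adjoint (A * B) = mat_adjoint B * mat_adjoint A"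
  using assms by (intro eq_matI) (auto simp: scalar_prod_def cnj_sum mult.commute)

lemma mat_adjoint_add:
  fixes A B :: "complex mat"
  assumes "dim_row A = dim_row B" "dim_col A = dim_col B"
  shows "mat_adjoint (A + B) = mat_adjoint A + mat_adjoint B"
  using assms by (intro eq_matI) auto

lemma mat_adjoint_minus:
  fixes A B :: "complex mat"
  assumes "dim_row A = dim_row B" "dim_col A = dim_col B"
  shows "mat_adjoint (A - B) = mat_adjoint A - mat_adjoint B"
  using assms by (intro eq_matI) auto

lemma mat_adjoint_four_block_mat:
  fixes A B C D :: "complex mat"
  assumes "A \<in> carrier_mat n1 k1" "B \<in> carrier_mat n1 k2" "C \<in> carrier_mat n2 k1" "D \<in> carrier_mat n2 k2"
  shows "mat_adjoint (four_block_mat A B C D) =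
    four_block_mat (mat_adjoint A) (mat_adjoint C) (mat_adjoint B) (mat_adjoint D)"
  using assms by (intro eq_matI) auto

text \<open>Variants of the library rules with dimension premises instead of carrier premises, which
the simplifier cannot discharge for compound products. The \<open>_subst\<close> forms let an equation
A B = D rewrite inside right-associated products.\<close>

lemma assoc_mult_mat_dim:
  fixes A B C :: "'a :: semiring_0 mat"
  shows "dim_col A = dim_row B \<Longrightarrow> dim_col B = dim_row C \<Longrightarrow> A * B * C = A * (B * C)"
  by (rule assoc_mult_mat[of A "dim_row A" "dim_col A" B "dim_col B" C "dim_col C"]) auto

lemma mult_mat_assoc_subst:
  fixes A B D T :: "'a :: semiring_0 mat"
  assumes "A * B = D" "dim_col A = dim_row B" "dim_col B = dim_row T"
  shows "A * (B * T) = D * T"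
  using assms assoc_mult_mat_dim[of A B T] by simp

lemma mult_mat_assoc_subst3:
  fixes A B C D T :: "'a :: semiring_0 mat"
  assumes "A * B * C = D" "dim_col A = dim_row B" "dim_col B = dim_row C" "dim_col C = dim_row T"
  shows "A * (B * (C * T)) = D * T"
  using assms assoc_mult_mat_dim[of A B "C * T"] assoc_mult_mat_dim[of "A * B" C T] by simp

lemma mult_add_distrib_mat_dim:
  fixes A B C :: "'a :: semiring_0 mat"
  shows "dim_col A = dim_row B \<Longrightarrow> dim_row B = dim_row C \<Longrightarrow> dim_col B = dim_col C \<Longrightarrow>
    A * (B + C) = A * B + A * C"
  by (rule mult_add_distrib_mat[of A "dim_row A" "dim_col A" B "dim_col B" C]) auto

lemma add_mult_distrib_mat_dim:
  fixes A B C :: "'a :: semiring_0 mat"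
  shows "dim_row A = dim_row B \<Longrightarrow> dim_col A = dim_col B \<Longrightarrow> dim_col B = dim_row C \<Longrightarrow>
    (A + B) * C = A * C + B * C"
  by (rule add_mult_distrib_mat[of A "dim_row A" "dim_col A" B C "dim_col C"]) auto

lemma mult_minus_distrib_mat_dim:
  fixes A B C :: "'a :: ring mat"
  shows "dim_col A = dim_row B \<Longrightarrow> dim_row B = dim_row C \<Longrightarrow> dim_col B = dim_col C \<Longrightarrow>
    A * (B - C) = A * B - A * C"
  by (rule mult_minus_distrib_mat[of A "dim_row A" "dim_col A" B "dim_col B" C]) auto

lemma minus_mult_distrib_mat_dim:
  fixes A B C :: "'a :: ring mat"
  shows "dim_row A = dim_row B \<Longrightarrow> dim_col A = dim_col B \<Longrightarrow> dim_col B = dim_row C \<Longrightarrow>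
    (A - B) * C = A * C - B * C"
  by (rule minus_mult_distrib_mat[of A "dim_row A" "dim_col A" B C "dim_col C"]) auto

lemma left_add_zero_mat_dim:
  "dim_row (A :: 'a :: monoid_add mat) = n \<Longrightarrow> dim_col A = k \<Longrightarrow> 0\<^sub>m n k + A = A"
  by (intro eq_matI) auto

lemma right_add_zero_mat_dim:
  "dim_row (A :: 'a :: monoid_add mat) = n \<Longrightarrow> dim_col A = k \<Longrightarrow> A + 0\<^sub>m n k = A"
  by (intro eq_matI) auto

definition penrose_inverse :: "complex mat \<Rightarrow> complex mat \<Rightarrow> bool" where
  "penrose_inverse A B \<longleftrightarrow> B \<in> carrier_mat (dim_col A) (dim_row A) \<and>
     A * B * A = A \<and> B * A * B = B \<and>
     mat_adjoint (A * B) = A * B \<and> mat_adjoint (B * A) = B * A"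

lemma penrose_inverse_productsI:
  fixes A B H K :: "complex mat"
  assumes "A \<in> carrier_mat m n" "B \<in> carrier_mat n m"
    and "A * B = H" "H * A = A" "mat_adjoint H = H"
    and "B * A = K" "K * B = B" "mat_adjoint K = K"
  shows "penrose_inverse A B"
  using assms unfolding penrose_inverse_def by auto

lemma penrose_inverse_range_projection:
  fixes N Nd :: "complex mat"
  assumes N: "N \<in> carrier_mat m n" and pN: "penrose_inverse N Nd"
  shows "N * Nd \<in> carrier_mat m m" "N * Nd * (N * Nd) = N * Nd" "mat_adjoint (N * Nd) = N * Nd"
    "N * Nd * N = N" "Nd * (N * Nd) = Nd"
proof -
  from pN N have Nd: "Nd \<in> carrier_mat n m" and N1: "N * Nd * N = N" and N2: "Nd * N * Nd = Nd"
    and N3: "mat_adjoint (N * Nd) = N * Nd" by (auto simp: penrose_inverse_def)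
  show "mat_adjoint (N * Nd) = N * Nd" by (fact N3)
  note d = carrier_matD[OF N] carrier_matD[OF Nd]
  show "N * Nd \<in> carrier_mat m m" using N Nd by simp
  show "N * Nd * (N * Nd) = N * Nd" "N * Nd * N = N" "Nd * (N * Nd) = Nd"
    using N1 N2 d by (simp_all flip: assoc_mult_mat_dim)
qed

lemma penrose_inverse_unique:
  assumes A: "A \<in> carrier_mat m n" and pB: "penrose_inverse A B" and pC: "penrose_inverse A C"
  shows "B = C"
proof -
  from pB have B: "B \<in> carrier_mat n m" and B1: "A * B * A = A" and B2: "B * A * B = B"
    and B3: "mat_adjoint (A * B) = A * B" and B4: "mat_adjoint (B * A) = B * A"
    using A by (auto simp: penrose_inverse_def)
  from pC have C: "C \<in> carrier_mat n m" and C1: "A * C * A = A" and C2: "C * A * C = C"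
    and C3: "mat_adjoint (A * C) = A * C" and C4: "mat_adjoint (C * A) = C * A"
    using A by (auto simp: penrose_inverse_def)
  note d = carrier_matD[OF A] carrier_matD[OF B] carrier_matD[OF C]
  \<comment> \<open>Both B and C equal B A C.\<close>
  have Aadj: "mat_adjoint A = mat_adjoint A * (A * C)"
    using arg_cong[OF C1, of mat_adjoint] C3 d by (simp add: mat_adjoint_mult)
  have Aadj2: "mat_adjoint A = B * A * mat_adjoint A"
    using arg_cong[OF B1, of mat_adjoint] B4 d by (simp add: mat_adjoint_mult assoc_mult_mat_dim)
  have "B = B * mat_adjoint (A * B)" using B2 B3 d by (simp add: assoc_mult_mat_dim)
  also have "\<dots> = B * (mat_adjoint B * (mat_adjoint A * (A * C)))"
    using d by (subst Aadj[symmetric]) (simp add: mat_adjoint_mult)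
  also have "\<dots> = B * mat_adjoint (A * B) * (A * C)"
    using d by (simp add: mat_adjoint_mult assoc_mult_mat_dim)
  also have "\<dots> = B * A * C" using B2 B3 d by (simp add: assoc_mult_mat_dim)
  also have "\<dots> = B * A * (mat_adjoint (C * A) * C)" using C2 C4 by simp
  also have "\<dots> = (B * A * mat_adjoint A) * mat_adjoint C * C"
    using d by (simp add: mat_adjoint_mult assoc_mult_mat_dim)
  also have "\<dots> = mat_adjoint (C * A) * C"
    using d by (simp flip: Aadj2 add: mat_adjoint_mult)
  also have "\<dots> = C" using C2 C4 by simp
  finally show ?thesis .
qed

lemma mp_pinv_eqI:
  assumes "A \<in> carrier_mat m n" "penrose_inverse A B"
  shows "mp_pinv A = B"
  unfolding mp_pinv_def
  using assms penrose_inverse_unique[OF assms] unfolding penrose_inverse_def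
  by (intro the_equality) blast+

lemma penrose_inverse_mat_adjoint:
  assumes A: "A \<in> carrier_mat m n" and p: "penrose_inverse A B"
  shows "penrose_inverse (mat_adjoint A) (mat_adjoint B)"
proof -
  from p have B: "B \<in> carrier_mat n m" and B1: "A * B * A = A" and B2: "B * A * B = B"
    and B3: "mat_adjoint (A * B) = A * B" and B4: "mat_adjoint (B * A) = B * A"
    using A by (auto simp: penrose_inverse_def)
  note d = carrier_matD[OF A] carrier_matD[OF B]
  have "mat_adjoint A * mat_adjoint B = B * A" "mat_adjoint B * mat_adjoint A = A * B"
    using B3 B4 d by (simp_all add: mat_adjoint_mult[symmetric])
  moreover have "mat_adjoint A * mat_adjoint B * mat_adjoint A = mat_adjoint (A * B * A)"
    "mat_adjoint B * mat_adjoint A * mat_adjoint B = mat_adjoint (B * A * B)"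
    using d by (simp_all add: mat_adjoint_mult assoc_mult_mat_dim)
  ultimately show ?thesis using B1 B2 B3 B4 B d unfolding penrose_inverse_def by simp
qed

lemma penrose_inverse_unitary_conj:
  assumes D: "D \<in> carrier_mat m n" and p: "penrose_inverse D D'"
    and U: "unitary_mat U m" and V: "unitary_mat V n"
  shows "penrose_inverse (U * D * mat_adjoint V) (V * D' * mat_adjoint U)"
proof -
  from p have D': "D' \<in> carrier_mat n m" and D1: "D * D' * D = D" and D2: "D' * D * D' = D'"
    and D3: "mat_adjoint (D * D') = D * D'" and D4: "mat_adjoint (D' * D) = D' * D"
    using D by (auto simp: penrose_inverse_def)
  from U V have Uc: "U \<in> carrier_mat m m" and U1: "mat_adjoint U * U = 1\<^sub>m m"
    and Vc: "V \<in> carrier_mat n n" and V1: "mat_adjoint V * V = 1\<^sub>m n"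
    by (auto simp: unitary_mat_def)
  note d = carrier_matD[OF D] carrier_matD[OF D'] carrier_matD[OF Uc] carrier_matD[OF Vc]
  have U1': "mat_adjoint U * (U * T) = T" if "dim_row T = m" for T
    using that d U1 by (simp flip: assoc_mult_mat_dim)
  have V1': "mat_adjoint V * (V * T) = T" if "dim_row T = n" for T
    using that d V1 by (simp flip: assoc_mult_mat_dim)
  have AB: "U * D * mat_adjoint V * (V * D' * mat_adjoint U) = U * (D * D') * mat_adjoint U"
    and BA: "V * D' * mat_adjoint U * (U * D * mat_adjoint V) = V * (D' * D) * mat_adjoint V"
    using d by (simp_all add: assoc_mult_mat_dim U1' V1')
  show ?thesis unfolding penrose_inverse_def
  proof (intro conjI)
    show "V * D' * mat_adjoint U
        \<in> carrier_mat (dim_col (U * D * mat_adjoint V)) (dim_row (U * D * mat_adjoint V))"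
      using d by (intro carrier_matI) simp_all
    show "U * D * mat_adjoint V * (V * D' * mat_adjoint U) * (U * D * mat_adjoint V)
        = U * D * mat_adjoint V"
      unfolding AB using d by (simp add: assoc_mult_mat_dim U1' mult_mat_assoc_subst3[OF D1])
    show "V * D' * mat_adjoint U * (U * D * mat_adjoint V) * (V * D' * mat_adjoint U)
        = V * D' * mat_adjoint U"
      unfolding BA using d by (simp add: assoc_mult_mat_dim V1' mult_mat_assoc_subst3[OF D2])
    show "mat_adjoint (U * D * mat_adjoint V * (V * D' * mat_adjoint U))
        = U * D * mat_adjoint V * (V * D' * mat_adjoint U)"
      unfolding AB using d D3 by (simp add: mat_adjoint_mult assoc_mult_mat_dim)
    show "mat_adjoint (V * D' * mat_adjoint U * (U * D * mat_adjoint V))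
        = V * D' * mat_adjoint U * (U * D * mat_adjoint V)"
      unfolding BA using d D4 by (simp add: mat_adjoint_mult assoc_mult_mat_dim)
  qed
qed

lemma minv_eqI:
  assumes A: "A \<in> carrier_mat n n" and B: "B \<in> carrier_mat n n" and AB: "A * B = 1\<^sub>m n"
  shows "minv A = B"
proof -
  have BA: "B * A = 1\<^sub>m n" using mat_mult_left_right_inverse[OF A B AB] .
  show ?thesis unfolding minv_def
  proof (rule the_equality)
    fix C
    assume "C \<in> carrier_mat (dim_row A) (dim_row A) \<and> A * C = 1\<^sub>m (dim_row A) \<and> C * A = 1\<^sub>m (dim_row A)"
    hence C: "C \<in> carrier_mat n n" and CA: "C * A = 1\<^sub>m n" using A by auto
    have "C = C * (A * B)" using AB C by simp
    also have "\<dots> = (C * A) * B" using A B C by simp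
    finally show "C = B" using CA B by simp
  qed (use A B AB BA in auto)
qed

lemma minv_invertible_mat:
  assumes A: "A \<in> carrier_mat n n" and "invertible_mat A"
  shows "minv A \<in> carrier_mat n n" "A * minv A = 1\<^sub>m n" "minv A * A = 1\<^sub>m n"
proof -
  from assms(2) obtain B where "inverts_mat A B" "inverts_mat B A"
    unfolding invertible_mat_def by auto
  hence AB: "A * B = 1\<^sub>m n" and BA: "B * A = 1\<^sub>m (dim_row B)"
    using A unfolding inverts_mat_def by auto
  have B: "B \<in> carrier_mat n n"
    using arg_cong[OF AB, of dim_col] arg_cong[OF BA, of dim_col] A by auto
  show "minv A \<in> carrier_mat n n" "A * minv A = 1\<^sub>m n" "minv A * A = 1\<^sub>m n"
    using minv_eqI[OF A B AB] AB B mat_mult_left_right_inverse[OF A B AB] by simp_all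
qed

lemma hermitian_right_inverse:
  fixes Z Zi :: "complex mat"
  assumes Z: "Z \<in> carrier_mat m m" and Zi: "Zi \<in> carrier_mat m m" and ZZi: "Z * Zi = 1\<^sub>m m"
    and herm: "mat_adjoint Z = Z"
  shows "mat_adjoint Zi = Zi"
proof -
  have inv: "mat_adjoint Zi * Z = 1\<^sub>m m"
    using arg_cong[OF ZZi, of mat_adjoint] Z Zi herm by (simp add: mat_adjoint_mult)
  have "mat_adjoint Zi = mat_adjoint Zi * (Z * Zi)" using ZZi Zi by simp
  also have "\<dots> = mat_adjoint Zi * Z * Zi"
    using carrier_matD[OF Z] carrier_matD[OF Zi] by (simp add: assoc_mult_mat_dim)
  also have "\<dots> = Zi" using Zi by (simp add: inv)
  finally show ?thesis .
qed

lemma mat_adjoint_mult_self_diag: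
  fixes M :: "complex mat"
  assumes j: "j < dim_col M"
  shows "(mat_adjoint M * M) $$ (j, j) = of_real (\<Sum>k<dim_row M. (cmod (M $$ (k, j)))\<^sup>2)"
proof -
  have "(mat_adjoint M * M) $$ (j, j) = (\<Sum>k<dim_row M. cnj (M $$ (k, j)) * M $$ (k, j))"
    using j by (simp add: scalar_prod_def lessThan_atLeast0)
  also have "\<dots> = (\<Sum>k<dim_row M. of_real ((cmod (M $$ (k, j)))\<^sup>2))"
    by (rule sum.cong, simp, subst complex_norm_square, rule mult.commute)
  finally show ?thesis by simp
qed

lemma gram_sum_eq_zero_imp_zero:
  fixes W :: "complex mat"
  assumes W: "W \<in> carrier_mat m 1" and R: "R \<in> carrier_mat k m"
    and eq: "mat_adjoint W * W + mat_adjoint (R * W) * (R * W) = 0\<^sub>m 1 1"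
  shows "W = 0\<^sub>m m 1"
proof -
  have RW: "R * W \<in> carrier_mat k 1" using R W by simp
  have "(mat_adjoint W * W) $$ (0, 0) + (mat_adjoint (R * W) * (R * W)) $$ (0, 0) = 0"
    using arg_cong[OF eq, of "\<lambda>M. M $$ (0, 0)"] RW by (subst (asm) index_add_mat(1)) auto
  moreover have "(mat_adjoint W * W) $$ (0, 0) = of_real (\<Sum>i<m. (cmod (W $$ (i, 0)))\<^sup>2)"
    using mat_adjoint_mult_self_diag[of 0 W] W by simp
  moreover have "(mat_adjoint (R * W) * (R * W)) $$ (0, 0)
      = of_real (\<Sum>i<k. (cmod ((R * W) $$ (i, 0)))\<^sup>2)"
    using mat_adjoint_mult_self_diag[of 0 "R * W"] RW by (simp only: carrier_matD)
  ultimately have "of_real (\<Sum>i<m. (cmod (W $$ (i, 0)))\<^sup>2)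
      + of_real (\<Sum>i<k. (cmod ((R * W) $$ (i, 0)))\<^sup>2) = (0 :: complex)"
    by simp
  hence "(\<Sum>i<m. (cmod (W $$ (i, 0)))\<^sup>2) + (\<Sum>i<k. (cmod ((R * W) $$ (i, 0)))\<^sup>2) = 0"
    by (metis of_real_add of_real_eq_0_iff)
  moreover have "(\<Sum>i<k. (cmod ((R * W) $$ (i, 0)))\<^sup>2) \<ge> 0"
    "(\<Sum>i<m. (cmod (W $$ (i, 0)))\<^sup>2) \<ge> 0"
    by (auto intro: sum_nonneg)
  ultimately have "(\<Sum>i<m. (cmod (W $$ (i, 0)))\<^sup>2) = 0" by linarith
  hence "\<forall>i<m. W $$ (i, 0) = 0" by (subst (asm) sum_nonneg_eq_0_iff) auto
  thus ?thesis using W by (intro eq_matI) auto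
qed

lemma one_plus_gram_invertible:
  fixes R :: "complex mat"
  assumes R: "R \<in> carrier_mat k m"
  obtains Zi where "Zi \<in> carrier_mat m m" "(1\<^sub>m m + mat_adjoint R * R) * Zi = 1\<^sub>m m"
proof -
  let ?Z = "1\<^sub>m m + mat_adjoint R * R"
  have Z: "?Z \<in> carrier_mat m m" using R by auto
  have "det ?Z \<noteq> 0"
  proof
    assume "det ?Z = 0"
    then obtain v where v: "v \<in> carrier_vec m" "v \<noteq> 0\<^sub>v m" "?Z *\<^sub>v v = 0\<^sub>v m"
      using det_0_iff_vec_prod_zero[OF Z] by auto
    define W where "W = mat m 1 (\<lambda>(i, j). v $ i)"
    have W: "W \<in> carrier_mat m 1" by (simp add: W_def)
    have "?Z * W = 0\<^sub>m m 1"
    proof (rule eq_matI)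
      fix i j assume ij: "i < dim_row (0\<^sub>m m 1 :: complex mat)" "j < dim_col (0\<^sub>m m 1 :: complex mat)"
      have "col W j = v" using ij v(1) by (auto simp: W_def)
      have "(?Z * W) $$ (i, j) = row ?Z i \<bullet> col W j" using ij Z W by (intro index_mult_mat(1)) auto
      also have "\<dots> = (?Z *\<^sub>v v) $ i" using ij carrier_matD[OF Z] \<open>col W j = v\<close> by simp
      finally show "(?Z * W) $$ (i, j) = 0\<^sub>m m 1 $$ (i, j)" using v ij by simp
    qed (use W Z in auto)
    moreover have "mat_adjoint W * (?Z * W) = mat_adjoint W * W + mat_adjoint (R * W) * (R * W)"
      using R W by (simp add: mult_add_distrib_mat_dim add_mult_distrib_mat_dim mat_adjoint_mult
          assoc_mult_mat_dim carrier_matD)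
    ultimately have "W = 0\<^sub>m m 1" using gram_sum_eq_zero_imp_zero[OF W R] W by simp
    hence "W $$ (i, 0) = 0" if "i < m" for i using that by simp
    hence "v $ i = 0" if "i < m" for i using that by (simp add: W_def)
    hence "v = 0\<^sub>v m" using v(1) by (intro eq_vecI) auto
    thus False using v(2) by simp
  qed
  from det_non_zero_imp_unit[OF Z this, of "()"] obtain B where "B \<in> carrier_mat m m" "?Z * B = 1\<^sub>m m"
    unfolding Units_def ring_mat_def by auto
  thus thesis by (rule that)
qed

lemma right_inverse_commute:
  fixes Z Zi P :: "'a :: field mat"
  assumes Z: "Z \<in> carrier_mat m m" and Zi: "Zi \<in> carrier_mat m m" and P: "P \<in> carrier_mat m m"
    and ZZi: "Z * Zi = 1\<^sub>m m" and comm: "Z * P = P * Z"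
  shows "Zi * P = P * Zi"
proof -
  have ZiZ: "Zi * Z = 1\<^sub>m m" by (rule mat_mult_left_right_inverse[OF Z Zi ZZi])
  note d = carrier_matD[OF Z] carrier_matD[OF Zi] carrier_matD[OF P]
  have "P * Zi = Zi * (Z * (P * Zi))" using d by (simp add: mult_mat_assoc_subst[OF ZiZ])
  also have "\<dots> = Zi * (P * (Z * Zi))" using d by (simp add: mult_mat_assoc_subst[OF comm] assoc_mult_mat_dim)
  also have "\<dots> = Zi * P" using d ZZi by simp
  finally show ?thesis by simp
qed

lemma invariant_complement_perturbation:
  fixes P X Xi :: "complex mat"
  assumes P: "P \<in> carrier_mat m m" "P * P = P"
    and X: "X \<in> carrier_mat m m" "Xi \<in> carrier_mat m m" "X * Xi = 1\<^sub>m m"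
    and inv: "P * X * P = P * X"
  defines "R \<equiv> X * (1\<^sub>m m - P) * Xi * ((1\<^sub>m m - P) - 1\<^sub>m m)"
  shows "P + R = X * P * Xi * P" "P * R = 0\<^sub>m m m" "R * P = R"
proof -
  define C where "C = X * P * Xi * P"
  note d = carrier_matD[OF P(1)] carrier_matD[OF X(1)] carrier_matD[OF X(2)]
  have Cc: "C \<in> carrier_mat m m" unfolding C_def using d by (intro carrier_matI) simp_all
  have "(1\<^sub>m m - P) - 1\<^sub>m m = - P" using d by (intro eq_matI) auto
  hence "R = - ((X * (1\<^sub>m m - P) * Xi) * P)" unfolding R_def using d by (simp add: uminus_mult_right_mat)
  also have "X * (1\<^sub>m m - P) * Xi = 1\<^sub>m m - X * P * Xi"
    using d X(3) by (simp add: mult_minus_distrib_mat_dim minus_mult_distrib_mat_dim)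
  also have "(1\<^sub>m m - X * P * Xi) * P = P - C"
    using d P(2) by (simp add: minus_mult_distrib_mat_dim C_def)
  also have "- (P - C) = C - P" using d carrier_matD[OF Cc] by (intro eq_matI) auto
  finally have RC: "R = C - P" .
  have PC: "P * C = P"
    unfolding C_def using d inv X(3) P(2)
    by (simp add: assoc_mult_mat_dim mult_mat_assoc_subst3[OF inv] mult_mat_assoc_subst[OF X(3)])
  have CP: "C * P = C" unfolding C_def using d P(2) by (simp add: assoc_mult_mat_dim)
  show "P + R = X * P * Xi * P" unfolding RC C_def[symmetric] using d carrier_matD[OF Cc] by (intro eq_matI) auto
  show "P * R = 0\<^sub>m m m" unfolding RC using d carrier_matD[OF Cc] P(1) by (simp add: mult_minus_distrib_mat_dim PC P(2))
  show "R * P = R" unfolding RC using d carrier_matD[OF Cc] by (simp add: minus_mult_distrib_mat_dim CP P(2))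
qed

lemma projection_perturbation_gram:
  fixes P R :: "complex mat"
  assumes P: "P \<in> carrier_mat m m" "P * P = P" "mat_adjoint P = P"
    and R: "R \<in> carrier_mat m m" "P * R = 0\<^sub>m m m" "R * P = R"
  shows "mat_adjoint (P + R) * (P + R) = P + mat_adjoint R * R"
    and "(1\<^sub>m m + mat_adjoint R * R) * P = P + mat_adjoint R * R"
    and "P * (1\<^sub>m m + mat_adjoint R * R) = P + mat_adjoint R * R"
    and "P * (1\<^sub>m m + mat_adjoint R) = mat_adjoint (P + R)"
proof -
  note d = carrier_matD[OF P(1)] carrier_matD[OF R(1)]
  have RsP: "mat_adjoint R * P = 0\<^sub>m m m"
    using arg_cong[OF R(2), of mat_adjoint] P(3) d by (simp add: mat_adjoint_mult)
  have PRs: "P * mat_adjoint R = mat_adjoint R"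
    using arg_cong[OF R(3), of mat_adjoint] P(3) d by (simp add: mat_adjoint_mult)
  have Cs: "mat_adjoint (P + R) = P + mat_adjoint R" using d P(3) by (simp add: mat_adjoint_add)
  show "mat_adjoint (P + R) * (P + R) = P + mat_adjoint R * R"
    unfolding Cs using d P(2) R(2) RsP
    by (simp add: mult_add_distrib_mat_dim add_mult_distrib_mat_dim left_add_zero_mat_dim right_add_zero_mat_dim)
  show "(1\<^sub>m m + mat_adjoint R * R) * P = P + mat_adjoint R * R"
    using d R(3) by (simp add: add_mult_distrib_mat_dim assoc_mult_mat_dim)
  show "P * (1\<^sub>m m + mat_adjoint R * R) = P + mat_adjoint R * R"
    using d PRs by (simp add: mult_add_distrib_mat_dim flip: assoc_mult_mat_dim)
  show "P * (1\<^sub>m m + mat_adjoint R) = mat_adjoint (P + R)"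
    unfolding Cs using d PRs by (simp add: mult_add_distrib_mat_dim)
qed

lemma gram_perturbation_inverse:
  fixes P R Zi :: "complex mat"
  assumes P: "P \<in> carrier_mat m m" "P * P = P" "mat_adjoint P = P"
    and R: "R \<in> carrier_mat m m" "P * R = 0\<^sub>m m m" "R * P = R"
    and Zi: "Zi \<in> carrier_mat m m" "(1\<^sub>m m + mat_adjoint R * R) * Zi = 1\<^sub>m m"
  defines "C \<equiv> P + R"
  shows "mat_adjoint Zi = Zi" and "Zi * mat_adjoint C * C = P"
    and "P * Zi * (1\<^sub>m m + mat_adjoint R) = Zi * mat_adjoint C"
    and "P * (Zi * mat_adjoint C) = Zi * mat_adjoint C"
proof -
  define Z where "Z = 1\<^sub>m m + mat_adjoint R * R"
  have Zc: "Z \<in> carrier_mat m m" unfolding Z_def using carrier_matD[OF R(1)] by (intro carrier_matI) simp_all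
  note gram = projection_perturbation_gram[OF P R, folded C_def Z_def]
  have Cc: "C \<in> carrier_mat m m" unfolding C_def using P(1) R(1) by simp
  note d = carrier_matD[OF P(1)] carrier_matD[OF R(1)] carrier_matD[OF Zc] carrier_matD[OF Zi(1)]
    carrier_matD[OF Cc]
  have ZiZ: "Zi * Z = 1\<^sub>m m" by (rule mat_mult_left_right_inverse[OF Zc Zi(1) Zi(2)[folded Z_def]])
  have ZiP: "Zi * P = P * Zi"
    using right_inverse_commute[OF Zc Zi(1) P(1) Zi(2)[folded Z_def]] gram(2,3) by simp
  show "mat_adjoint Zi = Zi"
    using hermitian_right_inverse[OF Zc Zi(1) Zi(2)[folded Z_def]] d
    by (simp add: Z_def mat_adjoint_add mat_adjoint_mult)
  show "Zi * mat_adjoint C * C = P"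
    using d P(1) by (simp flip: gram(2) add: gram(1) assoc_mult_mat_dim mult_mat_assoc_subst[OF ZiZ])
  show PZi: "P * Zi * (1\<^sub>m m + mat_adjoint R) = Zi * mat_adjoint C"
    using d by (simp add: assoc_mult_mat_dim mult_mat_assoc_subst[OF ZiP[symmetric]] gram(4))
  show "P * (Zi * mat_adjoint C) = Zi * mat_adjoint C"
    using d by (simp flip: PZi add: assoc_mult_mat_dim mult_mat_assoc_subst[OF P(2)])
qed

lemma compression_fixes_image:
  fixes P X Xi N :: "complex mat"
  assumes "P \<in> carrier_mat m m" "X \<in> carrier_mat m m" "Xi \<in> carrier_mat m m" "N \<in> carrier_mat m n"
    and XiX: "Xi * X = 1\<^sub>m m" and inv: "P * Xi * P = P * Xi" and PN: "P * N = N"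
  shows "X * P * Xi * P * (X * N) = X * N"
  using assms(1-4)[THEN carrier_matD(1)] assms(1-4)[THEN carrier_matD(2)] PN
  by (simp add: assoc_mult_mat_dim mult_mat_assoc_subst3[OF inv] mult_mat_assoc_subst[OF XiX])

lemma penrose_inverse_left_mult:
  fixes N Nd X Xi Zi :: "complex mat"
  assumes N: "N \<in> carrier_mat m n" and pN: "penrose_inverse N Nd"
    and X: "X \<in> carrier_mat m m" "Xi \<in> carrier_mat m m" "X * Xi = 1\<^sub>m m"
    and inv: "N * Nd * X * (N * Nd) = N * Nd * X" "N * Nd * Xi * (N * Nd) = N * Nd * Xi"
  defines "R \<equiv> X * (1\<^sub>m m - N * Nd) * Xi * ((1\<^sub>m m - N * Nd) - 1\<^sub>m m)"
  assumes Zi: "Zi \<in> carrier_mat m m" "(1\<^sub>m m + mat_adjoint R * R) * Zi = 1\<^sub>m m"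
  shows "penrose_inverse (X * N) (Nd * Xi * N * Nd * Zi * (1\<^sub>m m + mat_adjoint R))"
proof -
  define P where "P = N * Nd"
  define C where "C = P + R"
  define Cs where "Cs = mat_adjoint C"
  from pN N have Nd: "Nd \<in> carrier_mat n m" and NdNNd: "Nd * N * Nd = Nd"
    and NdNh: "mat_adjoint (Nd * N) = Nd * N" by (auto simp: penrose_inverse_def)
  note P = penrose_inverse_range_projection[OF N pN, folded P_def]
  note d = carrier_matD[OF N] carrier_matD[OF Nd] carrier_matD[OF X(1)] carrier_matD[OF X(2)]
    carrier_matD[OF Zi(1)] carrier_matD[OF P(1)]
  have Rc: "R \<in> carrier_mat m m" unfolding R_def using d by (intro carrier_matI) simp_all
  note d = d carrier_matD[OF Rc]
  have C: "C = X * P * Xi * P" and PR: "P * R = 0\<^sub>m m m" and RP: "R * P = R"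
    using invariant_complement_perturbation[OF P(1,2) X inv(1)[folded P_def]]
    unfolding R_def[folded P_def] C_def by simp_all
  note Zi' = gram_perturbation_inverse[OF P(1-3) Rc PR RP Zi, folded C_def Cs_def]
  have CXN: "C * (X * N) = X * N"
    unfolding C by (rule compression_fixes_image[OF P(1) X(1,2) N
          mat_mult_left_right_inverse[OF X(1,2,3)] inv(2)[folded P_def] P(4)])
  have CP: "C * P = C" unfolding C using d P(2) by (simp add: assoc_mult_mat_dim)
  have Cc: "C \<in> carrier_mat m m" and Csc: "Cs \<in> carrier_mat m m"
    using P(1) Rc by (simp_all add: Cs_def C_def)
  note d = d carrier_matD[OF Cc] carrier_matD[OF Csc]
  have B: "Nd * Xi * N * Nd * Zi * (1\<^sub>m m + mat_adjoint R) = Nd * Xi * (Zi * Cs)"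
    using d by (simp flip: Zi'(3) add: assoc_mult_mat_dim mult_mat_assoc_subst[OF P_def[symmetric]])
  have ZiCsXN: "Zi * (Cs * (X * N)) = P * (X * N)"
  proof -
    have "Zi * (Cs * (X * N)) = Zi * (Cs * (C * (X * N)))" using CXN by simp
    also have "\<dots> = P * (X * N)" using d by (simp add: mult_mat_assoc_subst3[OF Zi'(2)])
    finally show ?thesis .
  qed
  have BA: "Nd * Xi * (Zi * Cs) * (X * N) = Nd * N"
  proof -
    have "Nd * Xi * (Zi * Cs) * (X * N) = Nd * (P * (Xi * (P * (X * N))))"
      using d by (simp add: assoc_mult_mat_dim ZiCsXN mult_mat_assoc_subst[OF P(5)])
    also have "\<dots> = Nd * N" using d P(4)
      by (simp add: assoc_mult_mat_dim mult_mat_assoc_subst3[OF inv(2)[folded P_def]]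
          mult_mat_assoc_subst[OF mat_mult_left_right_inverse[OF X(1,2,3)]])
    finally show ?thesis .
  qed
  show ?thesis unfolding B
  proof (rule penrose_inverse_productsI[where H = "C * (Zi * Cs)" and K = "Nd * N" and m = m and n = n])
    show "X * N \<in> carrier_mat m n" "Nd * Xi * (Zi * Cs) \<in> carrier_mat n m"
      using d by (auto intro!: carrier_matI)
    show "X * N * (Nd * Xi * (Zi * Cs)) = C * (Zi * Cs)"
      unfolding C using d by (simp add: assoc_mult_mat_dim mult_mat_assoc_subst[OF P_def[symmetric]] Zi'(4))
    show "C * (Zi * Cs) * (X * N) = X * N"
      using d by (simp add: assoc_mult_mat_dim ZiCsXN mult_mat_assoc_subst[OF CP] CXN)
    show "mat_adjoint (C * (Zi * Cs)) = C * (Zi * Cs)"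
      using d Zi'(1) by (simp add: mat_adjoint_mult Cs_def assoc_mult_mat_dim)
    show "Nd * N * (Nd * Xi * (Zi * Cs)) = Nd * Xi * (Zi * Cs)"
      using d by (simp add: assoc_mult_mat_dim mult_mat_assoc_subst3[OF NdNNd])
  qed (fact BA NdNh)+
qed

lemma mp_pinv_left_mult:
  fixes N X :: "complex mat"
  assumes N: "N \<in> carrier_mat m n" and pN: "penrose_inverse N (mp_pinv N)"
    and X: "X \<in> carrier_mat m m" "invertible_mat X"
    and inv: "N * mp_pinv N * X * (N * mp_pinv N) = N * mp_pinv N * X"
      "N * mp_pinv N * minv X * (N * mp_pinv N) = N * mp_pinv N * minv X"
  shows "let R = X * E_proj N * minv X * (E_proj N - 1\<^sub>m m) in
    mp_pinv (X * N) = mp_pinv N * minv X * N * mp_pinv N *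
      minv (1\<^sub>m m + mat_adjoint R * R) * (1\<^sub>m m + mat_adjoint R)"
proof -
  define R where "R = X * E_proj N * minv X * (E_proj N - 1\<^sub>m m)"
  note Xi = minv_invertible_mat[OF X]
  have Nd: "mp_pinv N \<in> carrier_mat n m" using pN N by (simp add: penrose_inverse_def)
  have R': "R = X * (1\<^sub>m m - N * mp_pinv N) * minv X * ((1\<^sub>m m - N * mp_pinv N) - 1\<^sub>m m)"
    unfolding R_def E_proj_def using N by simp
  have Rc: "R \<in> carrier_mat m m"
    unfolding R' using carrier_matD[OF N] carrier_matD[OF Nd] carrier_matD[OF X(1)] carrier_matD[OF Xi(1)]
    by (intro carrier_matI) simp_all
  obtain Zi where Zi: "Zi \<in> carrier_mat m m" "(1\<^sub>m m + mat_adjoint R * R) * Zi = 1\<^sub>m m"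
    using one_plus_gram_invertible[OF Rc] by blast
  have "penrose_inverse (X * N) (mp_pinv N * minv X * N * mp_pinv N * Zi * (1\<^sub>m m + mat_adjoint R))"
    using penrose_inverse_left_mult[OF N pN X(1) Xi(1,2) inv Zi(1) Zi(2)[unfolded R']] unfolding R' .
  moreover have "minv (1\<^sub>m m + mat_adjoint R * R) = Zi"
    using Rc Zi by (intro minv_eqI) auto
  ultimately show ?thesis
    unfolding Let_def R_def[symmetric] using mp_pinv_eqI[OF mult_carrier_mat[OF X(1) N]] by simp
qed

lemma penrose_inverse_right_mult:
  fixes N Nd Y Yi Zi :: "complex mat"
  assumes N: "N \<in> carrier_mat m n" and pN: "penrose_inverse N Nd"
    and Y: "Y \<in> carrier_mat n n" "Yi \<in> carrier_mat n n" "Y * Yi = 1\<^sub>m n"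
    and inv: "Nd * N * Y * (Nd * N) = Y * (Nd * N)" "Nd * N * Yi * (Nd * N) = Yi * (Nd * N)"
  defines "L \<equiv> ((1\<^sub>m n - Nd * N) - 1\<^sub>m n) * Yi * (1\<^sub>m n - Nd * N) * Y"
  assumes Zi: "Zi \<in> carrier_mat n n" "(1\<^sub>m n + L * mat_adjoint L) * Zi = 1\<^sub>m n"
  shows "penrose_inverse (N * Y) ((1\<^sub>m n + mat_adjoint L) * Zi * Nd * N * Yi * Nd)"
proof -
  define Q where "Q = Nd * N"
  from pN N have Nd: "Nd \<in> carrier_mat n m" and Qh: "mat_adjoint Q = Q"
    by (auto simp: penrose_inverse_def Q_def)
  note d = carrier_matD[OF N] carrier_matD[OF Nd] carrier_matD[OF Y(1)] carrier_matD[OF Y(2)]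
    carrier_matD[OF Zi(1)]
  have Qc: "Q \<in> carrier_mat n n" using Nd N by (simp add: Q_def)
  have Lc: "L \<in> carrier_mat n n" unfolding L_def using d by (intro carrier_matI) simp_all
  note d = d carrier_matD[OF Qc] carrier_matD[OF Lc]
  have Q': "Q = mat_adjoint N * mat_adjoint Nd" using Qh d by (simp add: Q_def mat_adjoint_mult)
  have inv_adj: "Q * mat_adjoint T * Q = Q * mat_adjoint T"
    if "T \<in> carrier_mat n n" "Q * T * Q = T * Q" for T
    using arg_cong[OF that(2), of mat_adjoint] carrier_matD[OF that(1)] d Qh
    by (simp add: mat_adjoint_mult assoc_mult_mat_dim)
  have YYi': "mat_adjoint Y * mat_adjoint Yi = 1\<^sub>m n"
    using arg_cong[OF mat_mult_left_right_inverse[OF Y], of mat_adjoint] d by (simp add: mat_adjoint_mult)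
  have L': "mat_adjoint L = mat_adjoint Y * (1\<^sub>m n - mat_adjoint N * mat_adjoint Nd) * mat_adjoint Yi
      * ((1\<^sub>m n - mat_adjoint N * mat_adjoint Nd) - 1\<^sub>m n)"
    unfolding L_def Q_def[symmetric] Q'[symmetric] using d Qh
    by (simp add: mat_adjoint_mult mat_adjoint_minus assoc_mult_mat_dim)
  have "1\<^sub>m n + L * mat_adjoint L \<in> carrier_mat n n" using d by (intro carrier_matI) simp_all
  from hermitian_right_inverse[OF this Zi] have Zih: "mat_adjoint Zi = Zi"
    using d by (simp add: mat_adjoint_add mat_adjoint_mult)
  have "(1\<^sub>m n + mat_adjoint (mat_adjoint L) * mat_adjoint L) * Zi = 1\<^sub>m n" using Zi(2) by simp
  from penrose_inverse_left_mult[OF mat_adjoint_carrier[OF N] penrose_inverse_mat_adjoint[OF N pN]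
      mat_adjoint_carrier[OF Y(1)] mat_adjoint_carrier[OF Y(2)] YYi'
      inv_adj[OF Y(1) inv(1)[folded Q_def], unfolded Q']
      inv_adj[OF Y(2) inv(2)[folded Q_def], unfolded Q']
      Zi(1) this[unfolded L']]
  have "penrose_inverse (mat_adjoint Y * mat_adjoint N)
      (mat_adjoint Nd * mat_adjoint Yi * mat_adjoint N * mat_adjoint Nd * Zi * (1\<^sub>m n + L))"
    unfolding L'[symmetric] by simp
  from penrose_inverse_mat_adjoint[OF mult_carrier_mat[OF mat_adjoint_carrier[OF Y(1)]
      mat_adjoint_carrier[OF N]] this]
  show ?thesis using d Zih by (simp add: mat_adjoint_mult mat_adjoint_add assoc_mult_mat_dim)
qed

lemma mp_pinv_right_mult:
  fixes N Y :: "complex mat"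
  assumes N: "N \<in> carrier_mat m n" and pN: "penrose_inverse N (mp_pinv N)"
    and Y: "Y \<in> carrier_mat n n" "invertible_mat Y"
    and inv: "mp_pinv N * N * Y * (mp_pinv N * N) = Y * (mp_pinv N * N)"
      "mp_pinv N * N * minv Y * (mp_pinv N * N) = minv Y * (mp_pinv N * N)"
  shows "let L = (F_proj N - 1\<^sub>m n) * minv Y * F_proj N * Y in
    mp_pinv (N * Y) = (1\<^sub>m n + mat_adjoint L) * minv (1\<^sub>m n + L * mat_adjoint L) *
      mp_pinv N * N * minv Y * mp_pinv N"
proof -
  define L where "L = (F_proj N - 1\<^sub>m n) * minv Y * F_proj N * Y"
  note Yi = minv_invertible_mat[OF Y]
  have Nd: "mp_pinv N \<in> carrier_mat n m" using pN N by (simp add: penrose_inverse_def)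
  have L': "L = ((1\<^sub>m n - mp_pinv N * N) - 1\<^sub>m n) * minv Y * (1\<^sub>m n - mp_pinv N * N) * Y"
    unfolding L_def F_proj_def using N by simp
  have Lc: "L \<in> carrier_mat n n"
    unfolding L' using carrier_matD[OF N] carrier_matD[OF Nd] carrier_matD[OF Y(1)] carrier_matD[OF Yi(1)]
    by (intro carrier_matI) simp_all
  obtain Zi where Zi: "Zi \<in> carrier_mat n n" "(1\<^sub>m n + L * mat_adjoint L) * Zi = 1\<^sub>m n"
    using one_plus_gram_invertible[OF mat_adjoint_carrier[OF Lc]] by auto
  have "penrose_inverse (N * Y) ((1\<^sub>m n + mat_adjoint L) * Zi * mp_pinv N * N * minv Y * mp_pinv N)"
    using penrose_inverse_right_mult[OF N pN Y(1) Yi(1,2) inv Zi(1) Zi(2)[unfolded L']] unfolding L' .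
  moreover have "minv (1\<^sub>m n + L * mat_adjoint L) = Zi"
    using Lc Zi by (intro minv_eqI) auto
  ultimately show ?thesis
    unfolding Let_def L_def[symmetric] using mp_pinv_eqI[OF mult_carrier_mat[OF N Y(1)]] by simp
qed

definition first_block_proj :: "nat \<Rightarrow> nat \<Rightarrow> complex mat" where
  "first_block_proj r k = four_block_mat (1\<^sub>m r) (0\<^sub>m r k) (0\<^sub>m k r) (0\<^sub>m k k)"

lemma first_block_proj_carrier: "first_block_proj r k \<in> carrier_mat (r + k) (r + k)"
  unfolding first_block_proj_def by simp

lemma mat_adjoint_first_block_proj: "mat_adjoint (first_block_proj r k) = first_block_proj r k"
  unfolding first_block_proj_def by (subst mat_adjoint_four_block_mat[of _ r r _ k _ k]) auto

lemma four_block_mat_eqD: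
  fixes A B C D A' B' C' D' :: "'a :: zero mat"
  assumes c: "A \<in> carrier_mat n1 k1" "B \<in> carrier_mat n1 k2"
    "C \<in> carrier_mat n2 k1" "D \<in> carrier_mat n2 k2"
    "A' \<in> carrier_mat n1 k1" "B' \<in> carrier_mat n1 k2"
    "C' \<in> carrier_mat n2 k1" "D' \<in> carrier_mat n2 k2"
    and eq: "four_block_mat A B C D = four_block_mat A' B' C' D'"
  shows "A = A'" "B = B'" "C = C'" "D = D'"
proof -
  note dd = carrier_matD[OF c(1)] carrier_matD[OF c(2)] carrier_matD[OF c(3)] carrier_matD[OF c(4)]
    carrier_matD[OF c(5)] carrier_matD[OF c(6)] carrier_matD[OF c(7)] carrier_matD[OF c(8)]
  have e: "four_block_mat A B C D $$ (i, j) = four_block_mat A' B' C' D' $$ (i, j)" for i j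
    using eq by simp
  show "A = A'"
  proof (rule eq_matI)
    fix i j assume "i < dim_row A'" "j < dim_col A'"
    thus "A $$ (i, j) = A' $$ (i, j)" using e[of i j] dd by simp
  qed (use dd in auto)
  show "B = B'"
  proof (rule eq_matI)
    fix i j assume "i < dim_row B'" "j < dim_col B'"
    thus "B $$ (i, j) = B' $$ (i, j)" using e[of i "j + k1"] dd by simp
  qed (use dd in auto)
  show "C = C'"
  proof (rule eq_matI)
    fix i j assume "i < dim_row C'" "j < dim_col C'"
    thus "C $$ (i, j) = C' $$ (i, j)" using e[of "i + n1" j] dd by simp
  qed (use dd in auto)
  show "D = D'"
  proof (rule eq_matI)
    fix i j assume "i < dim_row D'" "j < dim_col D'"
    thus "D $$ (i, j) = D' $$ (i, j)" using e[of "i + n1" "j + k1"] dd by simp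
  qed (use dd in auto)
qed

lemma lower_block_triangular_inverse:
  fixes X1 X2 X4 Xi :: "complex mat"
  assumes X1: "X1 \<in> carrier_mat r r" and X2: "X2 \<in> carrier_mat k r" and X4: "X4 \<in> carrier_mat k k"
    and Xi: "Xi \<in> carrier_mat (r + k) (r + k)"
    and inv: "four_block_mat X1 (0\<^sub>m r k) X2 X4 * Xi = 1\<^sub>m (r + k)"
  obtains A1 A3 A4 where "A1 \<in> carrier_mat r r" "A3 \<in> carrier_mat k r" "A4 \<in> carrier_mat k k"
    "Xi = four_block_mat A1 (0\<^sub>m r k) A3 A4"
proof -
  obtain A1 A2 A3 A4 where sb: "split_block Xi r r = (A1, A2, A3, A4)"
    by (cases "split_block Xi r r") auto
  note A = split_block[OF sb carrier_matD[OF Xi]]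
  note d = carrier_matD[OF X1] carrier_matD[OF X2] carrier_matD[OF X4]
    carrier_matD[OF A(1)] carrier_matD[OF A(2)] carrier_matD[OF A(3)] carrier_matD[OF A(4)]
  have prod: "four_block_mat X1 (0\<^sub>m r k) X2 X4 * Xi = four_block_mat (X1 * A1 + 0\<^sub>m r k * A3)
      (X1 * A2 + 0\<^sub>m r k * A4) (X2 * A1 + X4 * A3) (X2 * A2 + X4 * A4)"
    unfolding A(5) by (rule mult_four_block_mat) (use X1 X2 X4 A in auto)
  have z: "X1 * A1 + 0\<^sub>m r k * A3 = X1 * A1" "X1 * A2 + 0\<^sub>m r k * A4 = X1 * A2"
    using A d by (simp_all add: right_add_zero_mat_dim)
  have c: "X1 * A1 \<in> carrier_mat r r" "X1 * A2 \<in> carrier_mat r k"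
    "X2 * A1 + X4 * A3 \<in> carrier_mat k r" "X2 * A2 + X4 * A4 \<in> carrier_mat k k"
    using X1 X2 X4 A by (auto intro!: mult_carrier_mat add_carrier_mat)
  have "four_block_mat (X1 * A1) (X1 * A2) (X2 * A1 + X4 * A3) (X2 * A2 + X4 * A4)
      = four_block_mat (1\<^sub>m r) (0\<^sub>m r k) (0\<^sub>m k r) (1\<^sub>m k)"
    using inv unfolding prod z four_block_one_mat .
  from four_block_mat_eqD(1,2)[OF c one_carrier_mat zero_carrier_mat zero_carrier_mat one_carrier_mat this]
  have X1A: "X1 * A1 = 1\<^sub>m r" "X1 * A2 = 0\<^sub>m r k" .
  have "A2 = A1 * X1 * A2" using mat_mult_left_right_inverse[OF X1 A(1) X1A(1)] A(2) by simp
  also have "\<dots> = 0\<^sub>m r k" using A(1,2) X1 X1A(2) by simp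
  finally have "A2 = 0\<^sub>m r k" .
  thus thesis using that[OF A(1) A(3) A(4)] A(5) by simp
qed

lemma first_block_proj_compress:
  fixes A1 A3 A4 :: "complex mat"
  assumes A: "A1 \<in> carrier_mat r r" "A3 \<in> carrier_mat k r" "A4 \<in> carrier_mat k k"
  defines "J \<equiv> first_block_proj r k"
  shows "J * four_block_mat A1 (0\<^sub>m r k) A3 A4 * J = J * four_block_mat A1 (0\<^sub>m r k) A3 A4"
proof -
  have "J * four_block_mat A1 (0\<^sub>m r k) A3 A4 = four_block_mat A1 (0\<^sub>m r k) (0\<^sub>m k r) (0\<^sub>m k k)"
    unfolding J_def first_block_proj_def using A
    by (subst mult_four_block_mat[of _ r r _ k _ k]) simp_all
  moreover have "four_block_mat A1 (0\<^sub>m r k) (0\<^sub>m k r) (0\<^sub>m k k) * J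
      = four_block_mat A1 (0\<^sub>m r k) (0\<^sub>m k r) (0\<^sub>m k k)"
    unfolding J_def first_block_proj_def using A
    by (subst mult_four_block_mat[of _ r r _ k _ k _ _ r _ k]) simp_all
  ultimately show ?thesis by simp
qed

lemma unitary_conj_mult:
  fixes U M M' :: "complex mat"
  assumes U: "unitary_mat U m" and M: "M \<in> carrier_mat m m" and M': "M' \<in> carrier_mat m m"
  shows "U * M * mat_adjoint U * (U * M' * mat_adjoint U) = U * (M * M') * mat_adjoint U"
proof -
  from U have Uc: "U \<in> carrier_mat m m" and U1: "mat_adjoint U * U = 1\<^sub>m m"
    by (auto simp: unitary_mat_def)
  note d = carrier_matD[OF Uc] carrier_matD[OF M] carrier_matD[OF M']
  have U1': "mat_adjoint U * (U * T) = T" if "dim_row T = m" for T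
    using that d U1 by (simp flip: assoc_mult_mat_dim)
  show ?thesis using d by (simp add: assoc_mult_mat_dim U1')
qed

lemma unitary_block_lower_triangular_compress:
  fixes U X Xi X1 X2 X4 :: "complex mat"
  assumes U: "unitary_mat U m" and rm: "r \<le> m"
    and X1: "X1 \<in> carrier_mat r r" and X2: "X2 \<in> carrier_mat (m - r) r"
    and X4: "X4 \<in> carrier_mat (m - r) (m - r)"
    and X: "X = U * four_block_mat X1 (0\<^sub>m r (m - r)) X2 X4 * mat_adjoint U"
    and Xi: "Xi \<in> carrier_mat m m" "X * Xi = 1\<^sub>m m"
  defines "P \<equiv> U * first_block_proj r (m - r) * mat_adjoint U"
  shows "P * X * P = P * X" and "P * Xi * P = P * Xi"
proof -
  from U have Uc: "U \<in> carrier_mat m m" and U1: "mat_adjoint U * U = 1\<^sub>m m"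
    and U2: "U * mat_adjoint U = 1\<^sub>m m" by (auto simp: unitary_mat_def)
  define X' where "X' = four_block_mat X1 (0\<^sub>m r (m - r)) X2 X4"
  define Xi' where "Xi' = mat_adjoint U * Xi * U"
  define J where "J = first_block_proj r (m - r)"
  have X'c: "X' \<in> carrier_mat m m" and Jc: "J \<in> carrier_mat m m"
    using X1 X2 X4 rm first_block_proj_carrier[of r "m - r"] by (auto simp: X'_def J_def)
  have Xi'c: "Xi' \<in> carrier_mat m m"
    unfolding Xi'_def by (rule mult_carrier_mat[OF mult_carrier_mat[OF mat_adjoint_carrier[OF Uc] Xi(1)] Uc])
  note d = carrier_matD[OF Uc] carrier_matD[OF X'c] carrier_matD[OF Xi'c] carrier_matD[OF Xi(1)]
  have Xi_conj: "Xi = U * Xi' * mat_adjoint U"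
    unfolding Xi'_def using d Xi(1) U2 by (simp add: assoc_mult_mat_dim mult_mat_assoc_subst[OF U2])
  have U1': "mat_adjoint U * (U * T) = T" if "dim_row T = m" for T
    using that d U1 by (simp flip: assoc_mult_mat_dim)
  have "U * (X' * Xi') * mat_adjoint U = 1\<^sub>m m"
    using Xi(2) unfolding X Xi_conj X'_def[symmetric] unitary_conj_mult[OF U X'c Xi'c] .
  hence "mat_adjoint U * (U * (X' * Xi') * mat_adjoint U) * U = mat_adjoint U * 1\<^sub>m m * U" by simp
  hence X'Xi': "X' * Xi' = 1\<^sub>m m" using d Uc U1 by (simp add: assoc_mult_mat_dim U1')
  obtain A1 A3 A4 where A: "A1 \<in> carrier_mat r r" "A3 \<in> carrier_mat (m - r) r"
      "A4 \<in> carrier_mat (m - r) (m - r)" "Xi' = four_block_mat A1 (0\<^sub>m r (m - r)) A3 A4"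
    using lower_block_triangular_inverse[OF X1 X2 X4, of Xi'] Xi'c X'Xi' rm
    unfolding X'_def by auto
  have JX: "J * X' * J = J * X'" and JXi: "J * Xi' * J = J * Xi'"
    unfolding J_def X'_def A(4)
    by (rule first_block_proj_compress[OF X1 X2 X4], rule first_block_proj_compress[OF A(1-3)])
  have "J * X' \<in> carrier_mat m m" "J * Xi' \<in> carrier_mat m m" using Jc X'c Xi'c by auto
  thus "P * X * P = P * X" "P * Xi * P = P * Xi"
    unfolding P_def J_def[symmetric] X X'_def[symmetric] Xi_conj
    by (simp_all add: unitary_conj_mult[OF U] Jc X'c Xi'c JX JXi)
qed

lemma unitary_block_upper_triangular_compress:
  fixes V Y Yi Y1 Y3 Y4 :: "complex mat"
  assumes V: "unitary_mat V n" and rn: "r \<le> n"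
    and Y1: "Y1 \<in> carrier_mat r r" and Y3: "Y3 \<in> carrier_mat r (n - r)"
    and Y4: "Y4 \<in> carrier_mat (n - r) (n - r)"
    and Y: "Y = V * four_block_mat Y1 Y3 (0\<^sub>m (n - r) r) Y4 * mat_adjoint V"
    and Yi: "Yi \<in> carrier_mat n n" "Y * Yi = 1\<^sub>m n"
  defines "Q \<equiv> V * first_block_proj r (n - r) * mat_adjoint V"
  shows "Q * Y * Q = Y * Q" and "Q * Yi * Q = Yi * Q"
proof -
  have Vc: "V \<in> carrier_mat n n" using V by (simp add: unitary_mat_def)
  have Bc: "four_block_mat Y1 Y3 (0\<^sub>m (n - r) r) Y4 \<in> carrier_mat n n"
    using Y1 Y3 Y4 rn by auto
  have Yc: "Y \<in> carrier_mat n n"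
    unfolding Y by (rule mult_carrier_mat[OF mult_carrier_mat[OF Vc Bc] mat_adjoint_carrier[OF Vc]])
  have Jc: "first_block_proj r (n - r) \<in> carrier_mat n n"
    using first_block_proj_carrier[of r "n - r"] rn by simp
  note d = carrier_matD[OF Vc] carrier_matD[OF Bc] carrier_matD[OF Yc] carrier_matD[OF Yi(1)]
    carrier_matD[OF Jc]
  have Qc: "Q \<in> carrier_mat n n" unfolding Q_def
    by (rule mult_carrier_mat[OF mult_carrier_mat[OF Vc Jc] mat_adjoint_carrier[OF Vc]])
  note d = d carrier_matD[OF Qc]
  have Qh: "mat_adjoint Q = Q"
    unfolding Q_def using d by (simp add: mat_adjoint_mult assoc_mult_mat_dim mat_adjoint_first_block_proj)
  have "mat_adjoint Y = V * four_block_mat (mat_adjoint Y1) (0\<^sub>m r (n - r)) (mat_adjoint Y3)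
      (mat_adjoint Y4) * mat_adjoint V"
    unfolding Y using d Y1 Y3 Y4
    by (simp add: mat_adjoint_mult assoc_mult_mat_dim mat_adjoint_four_block_mat[of _ r r _ "n - r" _ "n - r"])
  moreover have "mat_adjoint Y * mat_adjoint Yi = 1\<^sub>m n"
    using arg_cong[OF mat_mult_left_right_inverse[OF Yc Yi], of mat_adjoint] d
    by (simp add: mat_adjoint_mult)
  ultimately have "Q * mat_adjoint Y * Q = Q * mat_adjoint Y" "Q * mat_adjoint Yi * Q = Q * mat_adjoint Yi"
    unfolding Q_def
    by (rule unitary_block_lower_triangular_compress[OF V rn mat_adjoint_carrier[OF Y1]
        mat_adjoint_carrier[OF Y3] mat_adjoint_carrier[OF Y4] _ mat_adjoint_carrier[OF Yi(1)]])+
  from this[THEN arg_cong[of _ _ mat_adjoint]]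
  show "Q * Y * Q = Y * Q" "Q * Yi * Q = Yi * Q"
    using d Qh by (simp_all add: mat_adjoint_mult assoc_mult_mat_dim)
qed

lemma diagonal_mat_invertible:
  fixes S :: "complex mat"
  assumes S: "S \<in> carrier_mat r r" "diagonal_mat S" and nz: "\<forall>i<r. S $$ (i, i) \<noteq> 0"
  obtains Si where "Si \<in> carrier_mat r r" "S * Si = 1\<^sub>m r" "Si * S = 1\<^sub>m r"
proof -
  have "upper_triangular S" using S unfolding upper_triangular_def diagonal_mat_def by auto
  hence "det S = prod_list (diag_mat S)" by (rule det_upper_triangular[OF _ S(1)])
  moreover have "0 \<notin> set (diag_mat S)" using S(1) nz unfolding diag_mat_def by auto
  ultimately have "det S \<noteq> 0" by (simp add: prod_list_zero_iff)
  from det_non_zero_imp_unit[OF S(1) this, of "()"] obtain B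
    where "B \<in> carrier_mat r r" "B * S = 1\<^sub>m r" "S * B = 1\<^sub>m r"
    unfolding Units_def ring_mat_def by auto
  thus thesis by (intro that) auto
qed

lemma first_block_proj_mult_corner:
  fixes A :: "complex mat"
  assumes A: "A \<in> carrier_mat r c"
  shows "first_block_proj r k * four_block_mat A (0\<^sub>m r l) (0\<^sub>m k c) (0\<^sub>m k l)
    = four_block_mat A (0\<^sub>m r l) (0\<^sub>m k c) (0\<^sub>m k l)"
  unfolding first_block_proj_def using A
  by (subst mult_four_block_mat[of _ r r _ k _ k _ _ c _ l]) simp_all

lemma four_block_corner_mult_inverse:
  fixes A B :: "complex mat"
  assumes A: "A \<in> carrier_mat r r" and B: "B \<in> carrier_mat r r" and AB: "A * B = 1\<^sub>m r"
  shows "four_block_mat A (0\<^sub>m r l) (0\<^sub>m k r) (0\<^sub>m k l)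
      * four_block_mat B (0\<^sub>m r k) (0\<^sub>m l r) (0\<^sub>m l k) = first_block_proj r k"
  unfolding first_block_proj_def using A B AB
  by (subst mult_four_block_mat[of _ r r _ l _ k _ _ r _ k]) simp_all

lemma corner_penrose_inverse:
  fixes S Si :: "complex mat" and k l :: nat
  assumes S: "S \<in> carrier_mat r r" "Si \<in> carrier_mat r r" "S * Si = 1\<^sub>m r" "Si * S = 1\<^sub>m r"
  defines "D \<equiv> four_block_mat S (0\<^sub>m r l) (0\<^sub>m k r) (0\<^sub>m k l)"
    and "D' \<equiv> four_block_mat Si (0\<^sub>m r k) (0\<^sub>m l r) (0\<^sub>m l k)"
  shows "penrose_inverse D D'" "D * D' = first_block_proj r k" "D' * D = first_block_proj r l"
proof -
  show DD': "D * D' = first_block_proj r k" and D'D: "D' * D = first_block_proj r l"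
    unfolding D_def D'_def
    by (rule four_block_corner_mult_inverse[OF S(1,2,3)] four_block_corner_mult_inverse[OF S(2,1,4)])+
  have "first_block_proj r k * D = D" "first_block_proj r l * D' = D'"
    unfolding D_def D'_def by (rule first_block_proj_mult_corner[OF S(1)] first_block_proj_mult_corner[OF S(2)])+
  thus "penrose_inverse D D'"
    unfolding penrose_inverse_def using S(1,2) DD' D'D by (simp add: D_def D'_def mat_adjoint_first_block_proj)
qed

lemma svd_penrose_inverse:
  fixes N U V S :: "complex mat"
  assumes rm: "r \<le> m" and rn: "r \<le> n"
    and U: "unitary_mat U m" and V: "unitary_mat V n"
    and S: "S \<in> carrier_mat r r" "diagonal_mat S" "\<forall>i<r. S $$ (i, i) \<noteq> 0"
    and svd: "N = U * four_block_mat S (0\<^sub>m r (n - r)) (0\<^sub>m (m - r) r) (0\<^sub>m (m - r) (n - r))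
      * mat_adjoint V"
  shows "penrose_inverse N (mp_pinv N)"
    and "N * mp_pinv N = U * first_block_proj r (m - r) * mat_adjoint U"
    and "mp_pinv N * N = V * first_block_proj r (n - r) * mat_adjoint V"
proof -
  obtain Si where Si: "Si \<in> carrier_mat r r" "S * Si = 1\<^sub>m r" "Si * S = 1\<^sub>m r"
    using diagonal_mat_invertible[OF S] .
  define D where "D = four_block_mat S (0\<^sub>m r (n - r)) (0\<^sub>m (m - r) r) (0\<^sub>m (m - r) (n - r))"
  define D' where "D' = four_block_mat Si (0\<^sub>m r (m - r)) (0\<^sub>m (n - r) r) (0\<^sub>m (n - r) (m - r))"
  note Dp = corner_penrose_inverse[OF S(1) Si, where k = "m - r" and l = "n - r", folded D_def D'_def]
  from U V have Uc: "U \<in> carrier_mat m m" and U1: "mat_adjoint U * U = 1\<^sub>m m"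
    and Vc: "V \<in> carrier_mat n n" and V1: "mat_adjoint V * V = 1\<^sub>m n"
    by (auto simp: unitary_mat_def)
  have Dc: "D \<in> carrier_mat m n" and D'c: "D' \<in> carrier_mat n m"
    using four_block_carrier_mat[OF S(1) zero_carrier_mat[of "m - r" "n - r"]]
      four_block_carrier_mat[OF Si(1) zero_carrier_mat[of "n - r" "m - r"]]
      rm rn by (simp_all add: D_def D'_def)
  from penrose_inverse_unitary_conj[OF Dc Dp(1) U V]
  have pN: "penrose_inverse N (V * D' * mat_adjoint U)" unfolding svd D_def[symmetric] .
  have N: "N \<in> carrier_mat m n" unfolding svd D_def[symmetric]
    by (rule mult_carrier_mat[OF mult_carrier_mat[OF Uc Dc] mat_adjoint_carrier[OF Vc]])
  note Nd = mp_pinv_eqI[OF N pN]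
  note d = carrier_matD[OF Uc] carrier_matD[OF Vc] carrier_matD[OF Dc] carrier_matD[OF D'c]
  have U1': "mat_adjoint U * (U * T) = T" if "dim_row T = m" for T
    using that d U1 by (simp flip: assoc_mult_mat_dim)
  have V1': "mat_adjoint V * (V * T) = T" if "dim_row T = n" for T
    using that d V1 by (simp flip: assoc_mult_mat_dim)
  show "penrose_inverse N (mp_pinv N)" using pN Nd by simp
  have "N * mp_pinv N = U * (D * D') * mat_adjoint U"
    unfolding Nd unfolding svd D_def[symmetric] using d by (simp add: assoc_mult_mat_dim V1')
  thus "N * mp_pinv N = U * first_block_proj r (m - r) * mat_adjoint U" by (simp only: Dp(2))
  have "mp_pinv N * N = V * (D' * D) * mat_adjoint V"
    unfolding Nd unfolding svd D_def[symmetric] using d by (simp add: assoc_mult_mat_dim U1')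
  thus "mp_pinv N * N = V * first_block_proj r (n - r) * mat_adjoint V" by (simp only: Dp(3))
qed

theorem theorem3p1:
  fixes N U V S X Y :: "complex mat" and m n r :: nat
  assumes N: "N \<in> carrier_mat m n"
    and rk: "mat_rank N = r"
    and rm: "r \<le> m" and rn: "r \<le> n"
    and U: "unitary_mat U m" and V: "unitary_mat V n"
    and S: "S \<in> carrier_mat r r" "diagonal_mat S"
       "\<forall>i<r. Im (S $$ (i,i)) = 0 \<and> Re (S $$ (i,i)) > 0"
    and svd: "N = U * four_block_mat S (0\<^sub>m r (n - r)) (0\<^sub>m (m - r) r) (0\<^sub>m (m - r) (n - r)) * mat_adjoint V"
    and X: "X \<in> carrier_mat m m" "invertible_mat X"
    and Y: "Y \<in> carrier_mat n n" "invertible_mat Y"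
  shows
    "((\<exists>X1 X2 X4. X1 \<in> carrier_mat r r \<and> X2 \<in> carrier_mat (m - r) r \<and>
         X4 \<in> carrier_mat (m - r) (m - r) \<and>
         X = U * four_block_mat X1 (0\<^sub>m r (m - r)) X2 X4 * mat_adjoint U) \<longrightarrow>
      (let R = X * E_proj N * minv X * (E_proj N - 1\<^sub>m m) in
       mp_pinv (X * N) =
         mp_pinv N * minv X * N * mp_pinv N * minv (1\<^sub>m m + mat_adjoint R * R) * (1\<^sub>m m + mat_adjoint R)))
   \<and> ((\<exists>Y1 Y3 Y4. Y1 \<in> carrier_mat r r \<and> Y3 \<in> carrier_mat r (n - r) \<and>
         Y4 \<in> carrier_mat (n - r) (n - r) \<and>
         Y = V * four_block_mat Y1 Y3 (0\<^sub>m (n - r) r) Y4 * mat_adjoint V) \<longrightarrow>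
      (let L = (F_proj N - 1\<^sub>m n) * minv Y * F_proj N * Y in
       mp_pinv (N * Y) =
         (1\<^sub>m n + mat_adjoint L) * minv (1\<^sub>m n + L * mat_adjoint L) * mp_pinv N * N * minv Y * mp_pinv N))"
proof -
  have "\<forall>i<r. S $$ (i, i) \<noteq> 0" using S(3) by force
  note pinv = svd_penrose_inverse[OF rm rn U V S(1,2) this svd]
  note left = mp_pinv_left_mult[OF N pinv(1) X, unfolded pinv(2)]
    and right = mp_pinv_right_mult[OF N pinv(1) Y, unfolded pinv(3)]
    and lower = unitary_block_lower_triangular_compress[OF U rm _ _ _ _ minv_invertible_mat(1,2)[OF X]]
    and upper = unitary_block_upper_triangular_compress[OF V rn _ _ _ _ minv_invertible_mat(1,2)[OF Y]]
  show ?thesis using left right lower upper by blast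
qed

end
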